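(* In the setting described in the context, let $0<h<h_\circ$ and $\mathcal D_{v,\circ}^h=\{x\in\mathbb R^d:1/2\le\Phi_v^h(x)\le2\}$. Then $|\nabla\Phi_v^h(x)|\ge 1/(20d)$ for all $x\in\mathcal D_{v,\circ}^h$.
   Context: $B_r$ is the open ball of radius $r$ centered at $0$ in $\mathbb R^d$, $2\le d\le4$. Let $\phi:\mathbb R^d\to\mathbb R$ coincide on $[-1,1]^d$ with an analytic convex function of finite type defined on $[-2,2]^d$ and vanish outside $[-1,1]^d$; finite type means there are an integer $k\ge2$ and $m>0$ with $\sum_{j=2}^k\frac1{j!}|(u\cdot\nabla)^j\phi(x)|\ge m$ for all $x\in[-1,1]^d$ and unit vectors $u$. For $v\in\mathbb R^d$ with $-v\in\nabla\phi(B_{1/4})$, let $\omega_v\in B_{1/4}$ be the unique point with $\nabla\phi(\omega_v)=-v$ and $\Phi_v(x)=\phi(x+\omega_v)+v\cdot x-\phi(\omega_v)$. There is $c_\phi>0$ with $(c_\phi|x|)^k\le\Phi_v(x)$ on $B_{1/2}$ for all such $v$; fix $0<h_\circ\le(c_\phi/4)^k$. For $0<h<h_\circ$ let $\mathcal B_v^h=\{x\in B_{1/2}:\Phi_v(x)<h/2\}$, let $T_v^h$ be an invertible affine map of $\mathbb R^d$ with $B_1\subset(T_v^h)^{-1}\mathcal B_v^h\subset B_d$, and set $\Phi_v^h(x)=h^{-1}\Phi_v(T_v^hx)$. Standing assumption: $h_\circ$ is small enough that every $\Phi_v^h$ is defined, convex and of finite type on a ball $B_{R_\circ}$ with $R_\circ\ge100d$.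 *)

theory Defs
  imports "HOL-Analysis.Analysis"
begin

definition multi_indices :: "('a::euclidean_space \<Rightarrow> nat) set" where
  "multi_indices = {\<alpha>. \<forall>i. i \<notin> Basis \<longrightarrow> \<alpha> i = 0}"

text \<open>Real analyticity: near every point, f is the (unconditionally, hence absolutely,
  convergent) sum of a multivariate power series in the coordinates.\<close>
definition real_analytic_on :: "('a::euclidean_space \<Rightarrow> real) \<Rightarrow> 'a set \<Rightarrow> bool" where
  "real_analytic_on f S \<longleftrightarrow>
     (\<forall>x0\<in>S. \<exists>r>0. \<exists>c :: ('a \<Rightarrow> nat) \<Rightarrow> real. \<forall>x\<in>ball x0 r.
        ((\<lambda>\<alpha>. c \<alpha> * (\<Prod>i\<in>Basis. ((x - x0) \<bullet> i) ^ \<alpha> i)) has_sum f x) multi_indices)"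

definition grad :: "('a::euclidean_space \<Rightarrow> real) \<Rightarrow> 'a \<Rightarrow> 'a" where
  "grad f x = (THE g. (f has_derivative (\<lambda>y. g \<bullet> y)) (at x))"

definition dir_deriv :: "('a::euclidean_space \<Rightarrow> real) \<Rightarrow> 'a \<Rightarrow> 'a \<Rightarrow> nat \<Rightarrow> real" where
  "dir_deriv f x u j = (deriv ^^ j) (\<lambda>t::real. f (x + t *\<^sub>R u)) 0"

definition finite_type_on :: "'a set \<Rightarrow> ('a::euclidean_space \<Rightarrow> real) \<Rightarrow> nat \<Rightarrow> real \<Rightarrow> bool" where
  "finite_type_on S f k m \<longleftrightarrow> 2 \<le> k \<and> 0 < m \<and>
     (\<forall>x\<in>S. \<forall>u. norm u = 1 \<longrightarrow> m \<le> (\<Sum>j=2..k. \<bar>dir_deriv f x u j\<bar> / fact j))"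

definition invertible_affine :: "('a::euclidean_space \<Rightarrow> 'a) \<Rightarrow> bool" where
  "invertible_affine T \<longleftrightarrow> (\<exists>A b. linear A \<and> bij A \<and> (\<forall>y. T y = A y + b))"

definition admissible :: "('a::euclidean_space \<Rightarrow> real) \<Rightarrow> 'a \<Rightarrow> bool" where
  "admissible phi v \<longleftrightarrow> - v \<in> grad phi ` ball 0 (1/4)"

definition omega :: "('a::euclidean_space \<Rightarrow> real) \<Rightarrow> 'a \<Rightarrow> 'a" where
  "omega phi v = (THE w. w \<in> ball 0 (1/4) \<and> grad phi w = - v)"

definition Phi_v :: "('a::euclidean_space \<Rightarrow> real) \<Rightarrow> 'a \<Rightarrow> 'a \<Rightarrow> real" where
  "Phi_v phi v x = phi (x + omega phi v) + v \<bullet> x - phi (omega phi v)"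

definition B_vh :: "('a::euclidean_space \<Rightarrow> real) \<Rightarrow> 'a \<Rightarrow> real \<Rightarrow> 'a set" where
  "B_vh phi v h = {x \<in> ball 0 (1/2). Phi_v phi v x < h / 2}"

text \<open>T is the family of chosen affine normalisations T_v^h.\<close>
definition Phi_vh :: "('a::euclidean_space \<Rightarrow> real) \<Rightarrow> ('a \<Rightarrow> real \<Rightarrow> 'a \<Rightarrow> 'a) \<Rightarrow> 'a \<Rightarrow> real \<Rightarrow> 'a \<Rightarrow> real" where
  "Phi_vh phi T v h x = Phi_v phi v (T v h x) / h"

definition D_vh :: "('a::euclidean_space \<Rightarrow> real) \<Rightarrow> ('a \<Rightarrow> real \<Rightarrow> 'a \<Rightarrow> 'a) \<Rightarrow> 'a \<Rightarrow> real \<Rightarrow> 'a set" where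
  "D_vh phi T v h = {x. 1/2 \<le> Phi_vh phi T v h x \<and> Phi_vh phi T v h x \<le> 2}"

end

theory Submission
  imports Defs
begin

text \<open>
  Write F for the normalised function Phi_v^h, d for the dimension and z for the preimage
  of 0 under T_v^h. F is convex on B_R0, F(z) = 0, and z lies in B_d because the normalised
  section does. Off B_d we have F >= 1/2: either Phi_v >= h/2 there directly, or the image
  point has norm at least 1/2; then the point of the segment from z whose image has norm 1/4
  already has F > 1, since (c/4)^k > h, and convexity along the segment carries this to the
  end point. Convexity along the segment from z to x, with F(x) <= 2, then forces
  |x - z| <= 8d, and the tangent inequality at x gives
  1/2 <= F(x) - F(z) <= grad F(x) . (x - z) <= 8d |grad F(x)|.
  F is differentiable at x because phi is real analytic: its power series has a quadratic
  remainder after the affine terms.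
\<close>

definition multi_index_degree :: "('a::euclidean_space \<Rightarrow> nat) \<Rightarrow> nat" where
  "multi_index_degree \<alpha> = (\<Sum>i\<in>Basis. \<alpha> i)"

definition basis_monomial :: "'a::euclidean_space \<Rightarrow> ('a \<Rightarrow> nat) \<Rightarrow> real" where
  "basis_monomial h \<alpha> = (\<Prod>i\<in>Basis. (h \<bullet> i) ^ \<alpha> i)"

definition unit_multi_index :: "'a \<Rightarrow> 'a \<Rightarrow> nat" where
  "unit_multi_index i = (\<lambda>j. if j = i then 1 else 0)"

lemma norm_One_le_DIM: "norm (One :: 'a::euclidean_space) \<le> DIM('a)"
  using norm_sum[of "\<lambda>i. i" "Basis :: 'a set"] by simp

lemma low_degree_multi_indices:
  "{\<alpha> \<in> multi_indices. multi_index_degree \<alpha> \<le> 1} =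
     insert (\<lambda>_. 0) (unit_multi_index ` (Basis :: 'a::euclidean_space set))"
proof (intro equalityI subsetI)
  fix \<alpha> :: "'a \<Rightarrow> nat"
  assume "\<alpha> \<in> {\<alpha> \<in> multi_indices. multi_index_degree \<alpha> \<le> 1}"
  then have supp: "\<And>j. j \<notin> Basis \<Longrightarrow> \<alpha> j = 0" and deg: "(\<Sum>j\<in>Basis. \<alpha> j) \<le> 1"
    by (auto simp: multi_indices_def multi_index_degree_def)
  show "\<alpha> \<in> insert (\<lambda>_. 0) (unit_multi_index ` Basis)"
  proof (cases "\<exists>i\<in>Basis. \<alpha> i \<noteq> 0")
    case True
    then obtain i where i: "i \<in> Basis" "\<alpha> i \<noteq> 0" by blast
    have "\<alpha> i + (\<Sum>j\<in>Basis - {i}. \<alpha> j) \<le> 1"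
      using deg i(1) by (simp add: sum.remove)
    with i(2) have "\<alpha> i = 1" "(\<Sum>j\<in>Basis - {i}. \<alpha> j) = 0" by linarith+
    then have "\<alpha> j = unit_multi_index i j" for j
      using supp by (cases "j \<in> Basis") (auto simp: unit_multi_index_def)
    then have "\<alpha> = unit_multi_index i" ..
    with i(1) show ?thesis by blast
  next
    case False
    with supp have "\<alpha> = (\<lambda>_. 0)" by metis
    then show ?thesis by blast
  qed
qed (auto simp: multi_indices_def multi_index_degree_def unit_multi_index_def)

lemma basis_monomial_unit_multi_index:
  "i \<in> Basis \<Longrightarrow> basis_monomial h (unit_multi_index i) = h \<bullet> i"
  by (simp add: basis_monomial_def unit_multi_index_def if_distrib cong: if_cong)

lemma sum_low_degree_monomials:
  "(\<Sum>\<alpha>\<in>{\<alpha> \<in> multi_indices. multi_index_degree \<alpha> \<le> 1}. c \<alpha> * basis_monomial h \<alpha>) =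
     c (\<lambda>_. 0) + (\<Sum>i\<in>Basis. c (unit_multi_index i) *\<^sub>R i) \<bullet> h"
proof -
  have inj: "inj_on unit_multi_index (Basis :: 'a set)"
    by (rule inj_onI) (metis unit_multi_index_def zero_neq_one)
  have "(\<lambda>_. 0) \<notin> unit_multi_index ` (Basis :: 'a set)"
    by (auto simp: unit_multi_index_def fun_eq_iff) (metis zero_neq_one)
  moreover have "(\<Sum>i\<in>Basis. c (unit_multi_index i) * basis_monomial h (unit_multi_index i)) =
      (\<Sum>i\<in>Basis. c (unit_multi_index i) *\<^sub>R i) \<bullet> h"
    unfolding inner_sum_left
    by (intro sum.cong) (simp_all add: basis_monomial_unit_multi_index inner_commute)
  ultimately show ?thesis
    unfolding low_degree_multi_indices by (simp add: sum.reindex[OF inj] basis_monomial_def)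
qed

lemma abs_basis_monomial_le: "\<bar>basis_monomial h \<alpha>\<bar> \<le> norm h ^ multi_index_degree \<alpha>"
proof -
  have "\<bar>basis_monomial h \<alpha>\<bar> = (\<Prod>i\<in>Basis. \<bar>h \<bullet> i\<bar> ^ \<alpha> i)"
    by (simp add: basis_monomial_def abs_prod power_abs)
  also have "\<dots> \<le> (\<Prod>i\<in>Basis. norm h ^ \<alpha> i)"
    by (intro prod_mono) (auto intro: power_mono Basis_le_norm)
  finally show ?thesis
    by (simp add: multi_index_degree_def power_sum)
qed

lemma basis_monomial_scaleR_One: "basis_monomial (\<rho> *\<^sub>R One) \<alpha> = \<rho> ^ multi_index_degree \<alpha>"
  by (simp add: basis_monomial_def multi_index_degree_def power_sum)

lemma power_series_remainder_le:
  fixes c :: "('a::euclidean_space \<Rightarrow> nat) \<Rightarrow> real"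
  assumes "0 < \<rho>" and "norm h \<le> \<rho>"
    and majorant: "(\<lambda>\<alpha>. \<bar>c \<alpha>\<bar> * \<rho> ^ multi_index_degree \<alpha>) summable_on multi_indices"
    and series: "((\<lambda>\<alpha>. c \<alpha> * basis_monomial h \<alpha>) has_sum s) multi_indices"
  shows "\<bar>s - c (\<lambda>_. 0) - (\<Sum>i\<in>Basis. c (unit_multi_index i) *\<^sub>R i) \<bullet> h\<bar>
           \<le> (norm h / \<rho>)\<^sup>2 * (\<Sum>\<^sub>\<infinity>\<alpha>\<in>multi_indices. \<bar>c \<alpha>\<bar> * \<rho> ^ multi_index_degree \<alpha>)"
proof -
  define R where "R = s - c (\<lambda>_. 0) - (\<Sum>i\<in>Basis. c (unit_multi_index i) *\<^sub>R i) \<bullet> h"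
  define L where "L = {\<alpha> \<in> (multi_indices :: ('a \<Rightarrow> nat) set). multi_index_degree \<alpha> \<le> (1::nat)}"
  define H where "H = multi_indices - L"
  define q where "q = (norm h / \<rho>)\<^sup>2"
  define m where "m \<alpha> = q * (\<bar>c \<alpha>\<bar> * \<rho> ^ multi_index_degree \<alpha>)" for \<alpha>
  have "finite L"
    unfolding L_def low_degree_multi_indices by simp
  moreover have "(\<Sum>\<alpha>\<in>L. c \<alpha> * basis_monomial h \<alpha>) =
      c (\<lambda>_. 0) + (\<Sum>i\<in>Basis. c (unit_multi_index i) *\<^sub>R i) \<bullet> h"
    unfolding L_def by (rule sum_low_degree_monomials)
  ultimately have remainder: "((\<lambda>\<alpha>. c \<alpha> * basis_monomial h \<alpha>) has_sum R) H"
    using has_sum_Diff[OF series has_sum_finiteI[of L]]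
    by (simp add: R_def H_def L_def diff_diff_eq)
  have majorant_H: "(m has_sum (\<Sum>\<^sub>\<infinity>\<alpha>\<in>H. m \<alpha>)) H"
    unfolding m_def H_def
    by (intro has_sum_infsum summable_on_cmult_right summable_on_subset[OF majorant]) auto
  have termwise: "\<bar>c \<alpha> * basis_monomial h \<alpha>\<bar> \<le> m \<alpha>" if "\<alpha> \<in> H" for \<alpha>
  proof -
    have "2 \<le> multi_index_degree \<alpha>"
      using that by (auto simp: H_def L_def)
    have "\<bar>basis_monomial h \<alpha>\<bar> \<le> (norm h / \<rho>) ^ multi_index_degree \<alpha> * \<rho> ^ multi_index_degree \<alpha>"
      using abs_basis_monomial_le[of h \<alpha>] \<open>0 < \<rho>\<close> by (simp add: power_divide)
    also have "\<dots> \<le> q * \<rho> ^ multi_index_degree \<alpha>"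
      unfolding q_def using \<open>2 \<le> multi_index_degree \<alpha>\<close> assms(1,2)
      by (intro mult_right_mono power_decreasing) auto
    finally have "\<bar>c \<alpha>\<bar> * \<bar>basis_monomial h \<alpha>\<bar> \<le> \<bar>c \<alpha>\<bar> * (q * \<rho> ^ multi_index_degree \<alpha>)"
      by (rule mult_left_mono) simp
    then show ?thesis
      unfolding m_def by (simp add: abs_mult mult_ac)
  qed
  have "R \<le> (\<Sum>\<^sub>\<infinity>\<alpha>\<in>H. m \<alpha>)"
    by (rule has_sum_mono[OF remainder majorant_H]) (use termwise abs_le_D1 in blast)
  moreover have "- R \<le> (\<Sum>\<^sub>\<infinity>\<alpha>\<in>H. m \<alpha>)"
    by (rule has_sum_mono[OF has_sum_uminusI[OF remainder] majorant_H])
      (use termwise abs_le_D2 in blast)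
  ultimately have "\<bar>R\<bar> \<le> (\<Sum>\<^sub>\<infinity>\<alpha>\<in>H. m \<alpha>)"
    by (rule abs_leI)
  also have "\<dots> = q * (\<Sum>\<^sub>\<infinity>\<alpha>\<in>H. \<bar>c \<alpha>\<bar> * \<rho> ^ multi_index_degree \<alpha>)"
    unfolding m_def by (intro infsum_cmult_right summable_on_subset[OF majorant]) (auto simp: H_def)
  also have "\<dots> \<le> q * (\<Sum>\<^sub>\<infinity>\<alpha>\<in>multi_indices. \<bar>c \<alpha>\<bar> * \<rho> ^ multi_index_degree \<alpha>)"
    using \<open>0 < \<rho>\<close> unfolding q_def
    by (intro mult_left_mono infsum_mono_neutral summable_on_subset[OF majorant] majorant)
      (auto simp: H_def)
  finally show ?thesis
    unfolding R_def q_def .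
qed

lemma has_derivative_at_of_quadratic_remainder:
  fixes f :: "'a::real_normed_vector \<Rightarrow> 'b::real_normed_vector"
  assumes "bounded_linear f'" and "0 < \<rho>"
    and remainder: "\<And>h. norm h \<le> \<rho> \<Longrightarrow> norm (f (x + h) - f x - f' h) \<le> C * (norm h)\<^sup>2"
  shows "(f has_derivative f') (at x)"
  unfolding has_derivative_at_alt
proof (intro conjI allI impI assms(1))
  fix \<epsilon> :: real
  assume "0 < \<epsilon>"
  define C' where "C' = max C 1"
  define d where "d = min \<rho> (\<epsilon> / C')"
  have "0 < d" using \<open>0 < \<rho>\<close> \<open>0 < \<epsilon>\<close> by (simp add: d_def C'_def)
  moreover have "norm (f y - f x - f' (y - x)) \<le> \<epsilon> * norm (y - x)" if "norm (y - x) < d" for y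
  proof -
    have "norm (f y - f x - f' (y - x)) \<le> C * (norm (y - x))\<^sup>2"
      using remainder[of "y - x"] that by (simp add: d_def)
    also have "\<dots> \<le> (C' * norm (y - x)) * norm (y - x)"
      unfolding C'_def power2_eq_square mult.assoc by (intro mult_right_mono) auto
    also have "\<dots> \<le> \<epsilon> * norm (y - x)"
      using that by (intro mult_right_mono) (auto simp: d_def C'_def field_simps)
    finally show ?thesis .
  qed
  ultimately show "\<exists>d>0. \<forall>y. norm (y - x) < d \<longrightarrow> norm (f y - f x - f' (y - x)) \<le> \<epsilon> * norm (y - x)"
    by blast
qed

lemma real_analytic_on_differentiable:
  assumes "real_analytic_on f S" and "x \<in> S"
  shows "f differentiable (at x)"
proof -
  obtain r c where "0 < r" and series: "\<And>y. y \<in> ball x r \<Longrightarrow>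
      ((\<lambda>\<alpha>. c \<alpha> * basis_monomial (y - x) \<alpha>) has_sum f y) multi_indices"
    using assms unfolding real_analytic_on_def basis_monomial_def by blast
  define \<rho> where "\<rho> = r / (2 * DIM('a))"
  define K where "K = (\<Sum>\<^sub>\<infinity>\<alpha>\<in>multi_indices. \<bar>c \<alpha>\<bar> * \<rho> ^ multi_index_degree \<alpha>)"
  define g where "g = (\<Sum>i\<in>Basis. c (unit_multi_index i) *\<^sub>R i)"
  have "1 \<le> real DIM('a)"
    by (simp add: Suc_le_eq)
  then have "\<rho> \<le> r / 2"
    unfolding \<rho>_def using \<open>0 < r\<close> by (intro divide_left_mono) auto
  then have "0 < \<rho>" "\<rho> < r"
    using \<open>0 < r\<close> by (auto simp: \<rho>_def)
  have "norm (\<rho> *\<^sub>R One :: 'a) \<le> \<rho> * DIM('a)"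
    using norm_One_le_DIM[where 'a='a] \<open>0 < \<rho>\<close> by (simp add: mult_left_mono)
  moreover have "\<rho> * DIM('a) < r"
    using \<open>0 < r\<close> by (simp add: \<rho>_def field_simps)
  ultimately have "x + \<rho> *\<^sub>R One \<in> ball x r"
    by (simp add: dist_norm)
  \<comment> \<open>At this point every monomial equals \<rho>^|\<alpha>|, so the series there is the majorant.\<close>
  from series[OF this] have "(\<lambda>\<alpha>. c \<alpha> * \<rho> ^ multi_index_degree \<alpha>) summable_on multi_indices"
    by (auto simp: basis_monomial_scaleR_One summable_on_def)
  then have "(\<lambda>\<alpha>. norm (c \<alpha> * \<rho> ^ multi_index_degree \<alpha>)) summable_on multi_indices"
    by (rule summable_on_iff_abs_summable_on_real[THEN iffD1])
  then have majorant: "(\<lambda>\<alpha>. \<bar>c \<alpha>\<bar> * \<rho> ^ multi_index_degree \<alpha>) summable_on multi_indices"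
    using \<open>0 < \<rho>\<close> by (simp add: abs_mult)
  have remainder: "\<bar>f (x + h) - c (\<lambda>_. 0) - g \<bullet> h\<bar> \<le> (norm h / \<rho>)\<^sup>2 * K"
    if "norm h \<le> \<rho>" for h
    unfolding K_def g_def
    using that \<open>0 < \<rho>\<close> \<open>\<rho> < r\<close> series[of "x + h"]
    by (intro power_series_remainder_le majorant) (auto simp: dist_norm)
  have "f x = c (\<lambda>_. 0)"
    using remainder[of 0] \<open>0 < \<rho>\<close> by simp
  with remainder have "(f has_derivative (\<lambda>h. g \<bullet> h)) (at x)"
    by (intro has_derivative_at_of_quadratic_remainder[where \<rho>=\<rho> and C="K / \<rho>\<^sup>2"]
        bounded_linear_inner_right \<open>0 < \<rho>\<close>) (simp add: power_divide mult.commute)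
  then show ?thesis
    unfolding differentiable_def by blast
qed

lemma differentiable_transform_within_open:
  assumes "g differentiable (at x)" and "open S" and "x \<in> S" and "\<And>y. y \<in> S \<Longrightarrow> g y = f y"
  shows "f differentiable (at x)"
  using assms has_derivative_transform_within_open unfolding differentiable_def by metis

lemma has_derivative_grad:
  fixes f :: "'a::euclidean_space \<Rightarrow> real"
  assumes "f differentiable (at x)"
  shows "(f has_derivative (\<lambda>u. grad f x \<bullet> u)) (at x)"
proof -
  obtain f' where f': "(f has_derivative f') (at x)"
    using assms unfolding differentiable_def by blast
  define G where "G = adjoint f' 1"
  have "f' = (\<lambda>u. G \<bullet> u)"
    using adjoint_works[OF has_derivative_linear[OF f'], of _ 1]
    by (simp add: G_def inner_commute fun_eq_iff)
  with f' have G: "(f has_derivative (\<lambda>u. G \<bullet> u)) (at x)"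
    by simp
  have "grad f x = G"
    unfolding grad_def
  proof (rule the_equality)
    fix G' assume "(f has_derivative (\<lambda>u. G' \<bullet> u)) (at x)"
    with G have "(\<lambda>u. G \<bullet> u) = (\<lambda>u. G' \<bullet> u)"
      by (rule has_derivative_unique)
    then show "G' = G"
      by (metis vector_eq_rdot)
  qed (use G in simp)
  with G show ?thesis by simp
qed

lemma convex_on_has_derivative_above_tangent:
  fixes f :: "'a::real_normed_vector \<Rightarrow> real"
  assumes "convex_on S f" and "x \<in> S" and "z \<in> S" and f': "(f has_derivative f') (at x)"
  shows "f' (z - x) \<le> f z - f x"
proof -
  define g where "g = (\<lambda>t::real. f (x + t *\<^sub>R (z - x)))"
  have "((\<lambda>t. x + t *\<^sub>R (z - x)) has_derivative (\<lambda>t. t *\<^sub>R (z - x))) (at 0)"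
    by (auto intro!: derivative_eq_intros)
  from has_derivative_compose[OF this, of f f'] f'
  have "(g has_derivative (\<lambda>t. f' (t *\<^sub>R (z - x)))) (at 0)"
    by (simp add: g_def)
  then have "(g has_derivative (\<lambda>t. f' (z - x) * t)) (at 0)"
    by (simp add: linear_scale[OF has_derivative_linear[OF f']] mult.commute)
  then have "(g has_real_derivative f' (z - x)) (at 0)"
    by (simp add: has_field_derivative_def)
  then have "((\<lambda>t. (g t - g 0) / t) \<longlongrightarrow> f' (z - x)) (at_right 0)"
    unfolding has_field_derivative_iff by (auto intro: tendsto_mono at_le)
  moreover have "\<forall>\<^sub>F t in at_right 0. (g t - g 0) / t \<le> f z - f x"
    using eventually_at_right_real[OF zero_less_one]
  proof eventually_elim
    case (elim t)
    then have "g t \<le> (1 - t) * f x + t * f z"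
      using convex_onD[OF assms(1), of t x z] assms(2,3)
      by (simp add: g_def algebra_simps)
    with elim show ?case
      by (simp add: g_def field_simps)
  qed
  ultimately show ?thesis
    by (rule tendsto_upperbound) simp
qed

lemma convex_on_segment_le_of_zero:
  assumes "convex_on S f" and "z \<in> S" and "y \<in> S" and "f z = 0" and "0 \<le> t" and "t \<le> 1"
  shows "f ((1 - t) *\<^sub>R z + t *\<^sub>R y) \<le> t * f y"
  using convex_onD[OF assms(1), of t z y] assms(2-) by simp

lemma convex_on_ball_dist_to_zero_le:
  fixes f :: "'a::real_normed_vector \<Rightarrow> real"
  assumes convex: "convex_on (ball 0 R) f" and "3 * r \<le> R"
    and z: "z \<in> ball 0 r" "f z = 0"
    and "0 < a" and outer: "\<And>y. y \<in> ball 0 R \<Longrightarrow> r \<le> norm y \<Longrightarrow> a \<le> f y"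
    and x: "x \<in> ball 0 R" "a \<le> f x" "f x \<le> b"
  shows "a * norm (x - z) \<le> 2 * r * b"
proof -
  have "norm z < r"
    using z(1) by simp
  then have "0 < r"
    using norm_ge_zero[of z] by linarith
  show ?thesis
  proof (cases "norm (x - z) \<le> 2 * r")
    case True
    then have "a * norm (x - z) \<le> b * (2 * r)"
      using \<open>0 < a\<close> \<open>0 < r\<close> x by (intro mult_mono) auto
    then show ?thesis
      by (simp add: mult_ac)
  next
    case False
    define t where "t = 2 * r / norm (x - z)"
    define y where "y = (1 - t) *\<^sub>R z + t *\<^sub>R x"
    have "0 < norm (x - z)"
      using False \<open>0 < r\<close> by linarith
    with False have t: "0 < t" "t < 1"
      using \<open>0 < r\<close> by (simp_all add: t_def field_simps)
    have "y - z = t *\<^sub>R (x - z)"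
      by (simp add: y_def algebra_simps)
    then have "norm (y - z) = 2 * r"
      using t \<open>0 < r\<close> \<open>0 < norm (x - z)\<close> by (simp add: t_def)
    then have "r \<le> norm y" "norm y < R"
      using norm_triangle_ineq4[of y z] norm_triangle_ineq[of "y - z" z] z(1) \<open>3 * r \<le> R\<close>
      by auto
    then have "a \<le> f y"
      by (intro outer) auto
    also have "\<dots> \<le> t * f x"
      unfolding y_def using t z x \<open>0 < r\<close> \<open>3 * r \<le> R\<close>
      by (intro convex_on_segment_le_of_zero[OF convex]) auto
    also have "\<dots> \<le> t * b"
      using t x by (intro mult_left_mono) auto
    finally show ?thesis
      using \<open>0 < norm (x - z)\<close> by (simp add: t_def field_simps)
  qed
qed

lemma convex_on_ball_grad_lower_bound:
  fixes f :: "'a::euclidean_space \<Rightarrow> real"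
  assumes convex: "convex_on (ball 0 R) f" and "3 * r \<le> R"
    and z: "z \<in> ball 0 r" "f z = 0"
    and "0 < a" and outer: "\<And>y. y \<in> ball 0 R \<Longrightarrow> r \<le> norm y \<Longrightarrow> a \<le> f y"
    and x: "x \<in> ball 0 R" "a \<le> f x" "f x \<le> b"
    and "f differentiable (at x)"
  shows "a\<^sup>2 \<le> 2 * r * b * norm (grad f x)"
proof -
  have "norm z < r"
    using z(1) by simp
  then have "norm z < R"
    using \<open>3 * r \<le> R\<close> norm_ge_zero[of z] by linarith
  then have "z \<in> ball 0 R"
    by simp
  have "a \<le> f x - f z"
    using x z by simp
  also have "\<dots> \<le> grad f x \<bullet> (x - z)"
    using convex_on_has_derivative_above_tangent[OF convex x(1) \<open>z \<in> ball 0 R\<close>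
        has_derivative_grad[OF \<open>f differentiable (at x)\<close>]]
    by (simp add: inner_diff_right)
  also have "\<dots> \<le> norm (grad f x) * norm (x - z)"
    by (rule norm_cauchy_schwarz)
  finally have "a * a \<le> a * (norm (grad f x) * norm (x - z))"
    using \<open>0 < a\<close> by (intro mult_left_mono) auto
  also have "\<dots> = norm (grad f x) * (a * norm (x - z))"
    by (simp add: mult_ac)
  also have "\<dots> \<le> norm (grad f x) * (2 * r * b)"
    by (intro mult_left_mono convex_on_ball_dist_to_zero_le[OF assms(1-9)]) auto
  finally show ?thesis
    by (simp add: power2_eq_square mult_ac)
qed

lemma invertible_affine_convex_combination:
  assumes "invertible_affine T"
  shows "T ((1 - s) *\<^sub>R p + s *\<^sub>R q) = (1 - s) *\<^sub>R T p + s *\<^sub>R T q"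
proof -
  obtain A b where "linear A" and T: "\<And>y. T y = A y + b"
    using assms unfolding invertible_affine_def by blast
  have "A ((1 - s) *\<^sub>R p + s *\<^sub>R q) = (1 - s) *\<^sub>R A p + s *\<^sub>R A q"
    by (simp only: linear_add[OF \<open>linear A\<close>] linear_scale[OF \<open>linear A\<close>])
  then show ?thesis
    by (simp add: T algebra_simps)
qed

lemma invertible_affine_surj:
  assumes "invertible_affine T"
  shows "surj T"
proof -
  obtain A b where "bij A" and T: "\<And>y. T y = A y + b"
    using assms unfolding invertible_affine_def by blast
  have "T (inv A (y - b)) = y" for y
    by (simp add: T surj_f_inv_f[OF bij_is_surj[OF \<open>bij A\<close>]])
  then show ?thesis
    by (metis surj_def)
qed

lemma Phi_v_zero [simp]: "Phi_v phi v 0 = 0"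
  by (simp add: Phi_v_def)

lemma Phi_vh_ge_half_off_section:
  assumes T: "invertible_affine (T v h)" and convex: "convex_on S (Phi_vh phi T v h)"
    and z: "z \<in> S" "T v h z = 0" and y: "y \<in> S" "y \<notin> T v h -` B_vh phi v h"
    and lower: "\<And>w. w \<in> ball 0 (1/2) \<Longrightarrow> (c * norm w) ^ k \<le> Phi_v phi v w"
    and h: "0 < h" "h < (c / 4) ^ k"
  shows "1/2 \<le> Phi_vh phi T v h y"
proof (cases "h / 2 \<le> Phi_v phi v (T v h y)")
  case True
  with h show ?thesis
    by (simp add: Phi_vh_def field_simps)
next
  case False
  with y(2) have "1/2 \<le> norm (T v h y)"
    by (auto simp: B_vh_def)
  define s where "s = 1 / (4 * norm (T v h y))"
  have "s \<le> 1 / (4 * (1/2))"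
    unfolding s_def using \<open>1/2 \<le> norm (T v h y)\<close> by (intro divide_left_mono) auto
  then have s: "0 < s" "s \<le> 1"
    using \<open>1/2 \<le> norm (T v h y)\<close> by (auto simp: s_def)
  define ys where "ys = (1 - s) *\<^sub>R z + s *\<^sub>R y"
  have "T v h ys = s *\<^sub>R T v h y"
    unfolding ys_def invertible_affine_convex_combination[OF T] z(2) by simp
  then have "norm (T v h ys) = 1/4"
    using s \<open>1/2 \<le> norm (T v h y)\<close> by (simp add: s_def)
  then have "(c * norm (T v h ys)) ^ k \<le> Phi_v phi v (T v h ys)"
    by (intro lower) simp
  then have "(c / 4) ^ k \<le> Phi_v phi v (T v h ys)"
    unfolding \<open>norm (T v h ys) = 1/4\<close> by simp
  with h have "h < Phi_v phi v (T v h ys)"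
    by linarith
  with h have "1 < Phi_vh phi T v h ys"
    by (simp add: Phi_vh_def)
  also have "\<dots> \<le> s * Phi_vh phi T v h y"
    unfolding ys_def using z y s
    by (intro convex_on_segment_le_of_zero[OF convex]) (auto simp: Phi_vh_def)
  finally have "1 < s * Phi_vh phi T v h y" .
  then have "0 < Phi_vh phi T v h y"
    using s by (metis less_trans zero_less_one zero_less_mult_pos)
  then have "s * Phi_vh phi T v h y \<le> Phi_vh phi T v h y"
    using s by (intro mult_left_le_one_le) auto
  with \<open>1 < s * Phi_vh phi T v h y\<close> show ?thesis
    by linarith
qed

lemma Phi_vh_differentiable:
  assumes T: "invertible_affine (T v h)"
    and phi: "phi differentiable (at (T v h x + omega phi v))"
  shows "Phi_vh phi T v h differentiable (at x)"
proof -
  obtain A b where "linear A" and T_eq: "T v h = (\<lambda>y. A y + b)"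
    using T unfolding invertible_affine_def by blast
  then have "T v h differentiable (at x)"
    by (simp add: linear_conv_bounded_linear bounded_linear_imp_differentiable)
  then have "(\<lambda>y. phi (T v h y + omega phi v)) differentiable (at x)"
    using differentiable_compose[where g="\<lambda>y. T v h y + omega phi v", OF phi] by simp
  moreover have "(\<lambda>y. v \<bullet> T v h y) differentiable (at x)"
    using \<open>T v h differentiable (at x)\<close> by simp
  ultimately show ?thesis
    unfolding Phi_vh_def Phi_v_def divide_inverse by (intro derivative_intros) auto
qed

theorem lemma4p5:
  fixes phi phit :: "'a::euclidean_space \<Rightarrow> real"
    and k :: nat and m c h0 R0 h :: real
    and T :: "'a \<Rightarrow> real \<Rightarrow> 'a \<Rightarrow> 'a"
    and v x :: 'a
  assumes dim: "2 \<le> DIM('a)" "DIM('a) \<le> 4"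
    and phit_analytic: "real_analytic_on phit (box (- (2 *\<^sub>R One)) (2 *\<^sub>R One))"
    and phit_convex: "convex_on (box (- (2 *\<^sub>R One)) (2 *\<^sub>R One)) phit"
    and phit_type: "finite_type_on (cbox (- One) One) phit k m"
    and phi_eq: "\<And>y. phi y = (if y \<in> cbox (- One) One then phit y else 0)"
    and c_pos: "0 < c"
    and c_bound: "\<And>w y. admissible phi w \<Longrightarrow> y \<in> ball 0 (1/2) \<Longrightarrow>
                      (c * norm y) ^ k \<le> Phi_v phi w y"
    and h0: "0 < h0" "h0 \<le> (c / 4) ^ k"
    and T_norm: "\<And>w h'. admissible phi w \<Longrightarrow> 0 < h' \<Longrightarrow> h' < h0 \<Longrightarrow>
                    invertible_affine (T w h') \<and> ball 0 1 \<subseteq> T w h' -` B_vh phi w h'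
                    \<and> T w h' -` B_vh phi w h' \<subseteq> ball 0 (real DIM('a))"
    and R0: "100 * real DIM('a) \<le> R0"
    and standing: "\<And>w h'. admissible phi w \<Longrightarrow> 0 < h' \<Longrightarrow> h' < h0 \<Longrightarrow>
                    (\<forall>y\<in>ball 0 R0. T w h' y + omega phi w \<in> box (- One) One)
                    \<and> convex_on (ball 0 R0) (Phi_vh phi T w h')
                    \<and> (\<exists>k' m'. finite_type_on (ball 0 R0) (Phi_vh phi T w h') k' m')"
    and v: "admissible phi v"
    and h: "0 < h" "h < h0"
    and x: "x \<in> D_vh phi T v h" "x \<in> ball 0 R0"
  shows "1 / (20 * real DIM('a)) \<le> norm (grad (Phi_vh phi T v h) x)"
proof -
  let ?F = "Phi_vh phi T v h"
  from T_norm[OF v h] have T: "invertible_affine (T v h)"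
    and sublevel_bounded: "T v h -` B_vh phi v h \<subseteq> ball 0 DIM('a)" by auto
  from standing[OF v h] have in_box: "T v h x + omega phi v \<in> box (- One) One"
    and convex: "convex_on (ball 0 R0) ?F" using x(2) by auto
  obtain z where z: "T v h z = 0"
    using invertible_affine_surj[OF T] by (metis surjD)
  with h have "z \<in> T v h -` B_vh phi v h"
    by (simp add: B_vh_def)
  with sublevel_bounded have "z \<in> ball 0 DIM('a)"
    by blast
  moreover have "?F z = 0"
    using z by (simp add: Phi_vh_def)
  moreover have "1/2 \<le> ?F y" if "y \<in> ball 0 R0" "DIM('a) \<le> norm y" for y
    using that sublevel_bounded z \<open>z \<in> ball 0 DIM('a)\<close> c_bound[OF v] h h0 R0
    by (intro Phi_vh_ge_half_off_section[OF T convex]) auto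
  moreover have "phi differentiable (at (T v h x + omega phi v))"
  proof (rule differentiable_transform_within_open[OF _ open_box in_box])
    have "box (- One) One \<subseteq> box (- (2 *\<^sub>R One)) (2 *\<^sub>R One :: 'a)"
      by (rule subset_box_imp(4)) simp
    with in_box show "phit differentiable (at (T v h x + omega phi v))"
      by (intro real_analytic_on_differentiable[OF phit_analytic]) auto
    show "phit y = phi y" if "y \<in> box (- One) One" for y
      using that box_subset_cbox phi_eq by auto
  qed
  then have "?F differentiable (at x)"
    by (rule Phi_vh_differentiable[where T = T and v = v and h = h, OF T])
  ultimately have "(1/2)\<^sup>2 \<le> 2 * real DIM('a) * 2 * norm (grad ?F x)"
    using x R0 by (intro convex_on_ball_grad_lower_bound[OF convex]) (auto simp: D_vh_def)
  then show ?thesis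
    by (simp add: field_simps)
qed

end
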